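(* Given any $n$ binary sequences $\boldsymbol{\mu}: [n] \to \{0,1\}^k$, there is always an optimal solution of the AML problem (in either of its two equivalent versions) whose ancestral assignment has the form $\boldsymbol{\lambda} = \bar{\boldsymbol{\mu}}_f$ for some map $f: \{0,1\}^{[n]} \to \{0,1\}^{V-[n]}$, where $V$ is the vertex set of the tree of that solution.
   Context: $[n]=\{0,\ldots,n-1\}$; $\mathcal{T}_n$ is the set of trees whose $n$ leaves are labelled by $[n]$. AML, Version 1: given $\boldsymbol{\mu}$, find $T=(V,E)\in\mathcal{T}_n$, $\mathbf{p}:E\to[0,1/2]$ and $\boldsymbol{\lambda}:V\to\{0,1\}^k$ with $\lambda_v=\mu_v$ for all leaves $v\in[n]$, minimizing $-\log_2\prod_{e\in E}p_e^{d_e}(1-p_e)^{k-d_e}$, where $d_{u,v}=\|\lambda_u-\lambda_v\|_1$. AML, Version 2: find $T\in\mathcal{T}_n$ and such $\boldsymbol{\lambda}$ minimizing $\sum_{e\in E}H(d_e/k)$ with $H(p)=-p\log_2p-(1-p)\log_2(1-p)$ (obtained from Version 1 by setting $p_e=d_e/k$). For $1\le j\le k$, the $j$-th character of $\boldsymbol{\mu}$ is $\chi\in\{0,1\}^{[n]}$ with $\chi_u=(\mu_u)_j$. Given $f:\{0,1\}^{[n]}\to\{0,1\}^{V-[n]}$, the extension $\bar{\boldsymbol{\mu}}_f:V\to\{0,1\}^k$ is defined characterwise: for each character $\chi$ (the $j$-th), $(\bar\mu_f)_v$ has $j$-th coordinate $\chi_v$ if $v\in[n]$ and $f(\chi)_v$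 if $v\in V-[n]$. *)

theory Defs
  imports Complex_Main "HOL-Library.Extended_Real"
begin

text \<open>Vertices are natural numbers; the vertex set V is a finite set of naturals,
  and an (undirected) edge {u,v} is stored once as the pair (u,v) with u < v.\<close>

definition adj :: "(nat \<times> nat) set \<Rightarrow> (nat \<times> nat) set" where
  "adj E = E \<union> E\<inverse>"

definition connected_graph :: "nat set \<Rightarrow> (nat \<times> nat) set \<Rightarrow> bool" where
  "connected_graph V E \<longleftrightarrow> (\<forall>u\<in>V. \<forall>v\<in>V. (u, v) \<in> (adj E)\<^sup>*)"

definition is_tree :: "nat set \<Rightarrow> (nat \<times> nat) set \<Rightarrow> bool" where
  "is_tree V E \<longleftrightarrow> finite V \<and> V \<noteq> {} \<and>
     E \<subseteq> {(u, v). u \<in> V \<and> v \<in> V \<and> u < v} \<and>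
     connected_graph V E \<and> (\<forall>e\<in>E. \<not> connected_graph V (E - {e}))"

definition degree :: "(nat \<times> nat) set \<Rightarrow> nat \<Rightarrow> nat" where
  "degree E v = card {e \<in> E. fst e = v \<or> snd e = v}"

definition tree_n :: "nat \<Rightarrow> nat set \<Rightarrow> (nat \<times> nat) set \<Rightarrow> bool" where
  "tree_n n V E \<longleftrightarrow> is_tree V E \<and> {0..<n} \<subseteq> V \<and>
     (\<forall>v\<in>V. v < n \<longleftrightarrow> degree E v \<le> 1)"

text \<open>Binary sequences in {0,1}^k are bool lists of length k.\<close>
definition hamming :: "nat \<Rightarrow> bool list \<Rightarrow> bool list \<Rightarrow> nat" where
  "hamming k x y = card {j. j < k \<and> x ! j \<noteq> y ! j}"

definition edge_dist :: "nat \<Rightarrow> (nat \<Rightarrow> bool list) \<Rightarrow> nat \<times> nat \<Rightarrow> nat" where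
  "edge_dist k lam e = hamming k (lam (fst e)) (lam (snd e))"

definition H :: "real \<Rightarrow> real" where
  "H p = - p * log 2 p - (1 - p) * log 2 (1 - p)"

definition likelihood :: "nat \<Rightarrow> (nat \<times> nat) set \<Rightarrow> (nat \<times> nat \<Rightarrow> real)
    \<Rightarrow> (nat \<Rightarrow> bool list) \<Rightarrow> real" where
  "likelihood k E p lam =
     (\<Prod>e\<in>E. p e ^ edge_dist k lam e * (1 - p e) ^ (k - edge_dist k lam e))"

definition cost1 :: "nat \<Rightarrow> (nat \<times> nat) set \<Rightarrow> (nat \<times> nat \<Rightarrow> real)
    \<Rightarrow> (nat \<Rightarrow> bool list) \<Rightarrow> ereal" where
  "cost1 k E p lam =
     (if likelihood k E p lam = 0 then \<infinity> else ereal (- log 2 (likelihood k E p lam)))"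

definition cost2 :: "nat \<Rightarrow> (nat \<times> nat) set \<Rightarrow> (nat \<Rightarrow> bool list) \<Rightarrow> real" where
  "cost2 k E lam = (\<Sum>e\<in>E. H (real (edge_dist k lam e) / real k))"

definition assignment_ok :: "nat \<Rightarrow> nat \<Rightarrow> (nat \<Rightarrow> bool list) \<Rightarrow> nat set
    \<Rightarrow> (nat \<Rightarrow> bool list) \<Rightarrow> bool" where
  "assignment_ok n k mu V lam \<longleftrightarrow>
     (\<forall>v\<in>V. length (lam v) = k) \<and> (\<forall>v<n. lam v = mu v)"

definition AML1_feasible :: "nat \<Rightarrow> nat \<Rightarrow> (nat \<Rightarrow> bool list) \<Rightarrow> nat set
    \<Rightarrow> (nat \<times> nat) set \<Rightarrow> (nat \<times> nat \<Rightarrow> real) \<Rightarrow> (nat \<Rightarrow> bool list) \<Rightarrow> bool" where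
  "AML1_feasible n k mu V E p lam \<longleftrightarrow> tree_n n V E \<and>
     (\<forall>e\<in>E. 0 \<le> p e \<and> p e \<le> 1/2) \<and> assignment_ok n k mu V lam"

definition AML1_optimal :: "nat \<Rightarrow> nat \<Rightarrow> (nat \<Rightarrow> bool list) \<Rightarrow> nat set
    \<Rightarrow> (nat \<times> nat) set \<Rightarrow> (nat \<times> nat \<Rightarrow> real) \<Rightarrow> (nat \<Rightarrow> bool list) \<Rightarrow> bool" where
  "AML1_optimal n k mu V E p lam \<longleftrightarrow> AML1_feasible n k mu V E p lam \<and>
     (\<forall>V' E' p' lam'. AML1_feasible n k mu V' E' p' lam' \<longrightarrow>
        cost1 k E p lam \<le> cost1 k E' p' lam')"

definition AML2_feasible :: "nat \<Rightarrow> nat \<Rightarrow> (nat \<Rightarrow> bool list) \<Rightarrow> nat set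
    \<Rightarrow> (nat \<times> nat) set \<Rightarrow> (nat \<Rightarrow> bool list) \<Rightarrow> bool" where
  "AML2_feasible n k mu V E lam \<longleftrightarrow> tree_n n V E \<and> assignment_ok n k mu V lam"

definition AML2_optimal :: "nat \<Rightarrow> nat \<Rightarrow> (nat \<Rightarrow> bool list) \<Rightarrow> nat set
    \<Rightarrow> (nat \<times> nat) set \<Rightarrow> (nat \<Rightarrow> bool list) \<Rightarrow> bool" where
  "AML2_optimal n k mu V E lam \<longleftrightarrow> AML2_feasible n k mu V E lam \<and>
     (\<forall>V' E' lam'. AML2_feasible n k mu V' E' lam' \<longrightarrow> cost2 k E lam \<le> cost2 k E' lam')"

text \<open>The j-th character, an element of {0,1}^[n] (bool list of length n).\<close>
definition character :: "nat \<Rightarrow> (nat \<Rightarrow> bool list) \<Rightarrow> nat \<Rightarrow> bool list" where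
  "character n mu j = map (\<lambda>u. mu u ! j) [0..<n]"

text \<open>f maps a character to an element of {0,1}^(V-[n]) (only its values on
  V-[n] are used).\<close>
definition ext :: "nat \<Rightarrow> nat \<Rightarrow> (nat \<Rightarrow> bool list) \<Rightarrow> (bool list \<Rightarrow> nat \<Rightarrow> bool)
    \<Rightarrow> nat \<Rightarrow> bool list" where
  "ext n k mu f v = map (\<lambda>j. if v < n then mu v ! j else f (character n mu j) v) [0..<k]"

end

theory Submission
  imports Defs "HOL-Library.FuncSet"
begin

text \<open>For a fixed tree and fixed edge parameters the likelihood is a product over the k
  characters, and the factor of a character depends only on the ancestral labels in that column.
  Replacing every column by the best column carrying the same leaf character therefore does not
  decrease the likelihood, and the result is a labelling of the form mu-bar_f. Optimizing p as
  well, both versions become the maximization of a product of per-edge values depending only on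
  the Hamming distance (for Version 2, by Gibbs' inequality, the optimal rate is d/k and -log2 of
  the edge value is k H(d/k)). Such a product is maximized by some tree even though there are
  infinitely many trees, because a sum of nonnegative terms drawn from a finite set of values takes
  only finitely many values below any bound.\<close>

lemma prod_if_eq_power_card:
  fixes a b :: "'a::comm_monoid_mult"
  shows "(\<Prod>j<k. if P j then a else b) = a ^ card {j. j < k \<and> P j} * b ^ (k - card {j. j < k \<and> P j})"
proof -
  have "(\<Prod>j<k. if P j then a else b) = (\<Prod>j\<in>{..<k} \<inter> {j. P j}. a) * (\<Prod>j\<in>{..<k} \<inter> - {j. P j}. b)"
    by (rule prod.If_cases) simp
  moreover have "{..<k} \<inter> {j. P j} = {j. j < k \<and> P j}" by auto
  moreover have "{..<k} \<inter> - {j. P j} = {..<k} - {j. j < k \<and> P j}" by auto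
  moreover have "card ({..<k} - {j. j < k \<and> P j}) = k - card {j. j < k \<and> P j}"
    by (subst card_Diff_subset) auto
  ultimately show ?thesis by simp
qed

definition character_likelihood ::
    "(nat \<times> nat) set \<Rightarrow> (nat \<times> nat \<Rightarrow> real) \<Rightarrow> (nat \<Rightarrow> bool) \<Rightarrow> real" where
  "character_likelihood E p c = (\<Prod>e\<in>E. if c (fst e) \<noteq> c (snd e) then p e else 1 - p e)"

lemma likelihood_eq_prod_character_likelihood:
  "likelihood k E p lam = (\<Prod>j<k. character_likelihood E p (\<lambda>v. lam v ! j))"
proof -
  have "likelihood k E p lam
      = (\<Prod>e\<in>E. \<Prod>j<k. if lam (fst e) ! j \<noteq> lam (snd e) ! j then p e else 1 - p e)"
    unfolding likelihood_def edge_dist_def hamming_def by (simp add: prod_if_eq_power_card)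
  also have "\<dots> = (\<Prod>j<k. character_likelihood E p (\<lambda>v. lam v ! j))"
    unfolding character_likelihood_def by (rule prod.swap)
  finally show ?thesis .
qed

lemma character_nth: "v < n \<Longrightarrow> character n mu j ! v = mu v ! j"
  unfolding character_def by simp

lemma ext_nth:
  "j < k \<Longrightarrow> ext n k mu f v ! j = (if v < n then mu v ! j else f (character n mu j) v)"
  unfolding ext_def by simp

lemma ext_assignment_ok:
  assumes "\<forall>u<n. length (mu u) = k"
  shows "assignment_ok n k mu V (ext n k mu f)"
  unfolding assignment_ok_def using assms by (auto simp: ext_def intro: nth_equalityI)

lemma likelihood_le_ext:
  assumes p: "\<forall>e\<in>E. 0 \<le> p e \<and> p e \<le> 1" and leaves: "\<forall>v<n. lam v = mu v"
  shows "\<exists>f. likelihood k E p lam \<le> likelihood k E p (ext n k mu f)"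
proof -
  define q where "q j = character_likelihood E p (\<lambda>v. lam v ! j)" for j
  define charclass where "charclass \<chi> = {j. j < k \<and> character n mu j = \<chi>}" for \<chi>
  define best where "best \<chi> = (SOME j. j \<in> charclass \<chi> \<and> (\<forall>i\<in>charclass \<chi>. q i \<le> q j))" for \<chi>
  define f where "f \<chi> v = lam v ! best \<chi>" for \<chi> v
  have best: "best (character n mu j) \<in> charclass (character n mu j)"
    "\<forall>i\<in>charclass (character n mu j). q i \<le> q (best (character n mu j))" if "j < k" for j
  proof -
    let ?C = "charclass (character n mu j)"
    have "finite ?C" "j \<in> ?C" using that by (auto simp: charclass_def)
    then have "Max (q ` ?C) \<in> q ` ?C" by (intro Max_in) auto
    then obtain m where "m \<in> ?C" "q m = Max (q ` ?C)" by auto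
    with \<open>finite ?C\<close> have "\<exists>m. m \<in> ?C \<and> (\<forall>i\<in>?C. q i \<le> q m)" by auto
    from someI_ex[OF this] show "best (character n mu j) \<in> ?C"
      "\<forall>i\<in>?C. q i \<le> q (best (character n mu j))"
      unfolding best_def by blast+
  qed
  \<comment> \<open>columns of one character agree on the leaves, so copying the best one keeps the leaves\<close>
  have column: "(\<lambda>v. ext n k mu f v ! j) = (\<lambda>v. lam v ! best (character n mu j))" if "j < k" for j
  proof
    fix v
    let ?b = "best (character n mu j)"
    have "?b < k" "character n mu ?b = character n mu j"
      using best(1)[OF that] by (auto simp: charclass_def)
    then have "v < n \<Longrightarrow> mu v ! ?b = mu v ! j"
      by (metis character_nth)
    then show "ext n k mu f v ! j = lam v ! ?b"
      using that leaves by (simp add: ext_nth f_def)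
  qed
  have "likelihood k E p lam = (\<Prod>j<k. q j)"
    unfolding likelihood_eq_prod_character_likelihood q_def ..
  also have "\<dots> \<le> (\<Prod>j<k. q (best (character n mu j)))"
    using best p
    by (intro prod_mono) (auto simp: q_def character_likelihood_def charclass_def intro: prod_nonneg)
  also have "\<dots> = likelihood k E p (ext n k mu f)"
    unfolding likelihood_eq_prod_character_likelihood q_def
    by (rule prod.cong) (simp_all add: column)
  finally show ?thesis by blast
qed

lemma finite_bounded_sums:
  fixes R :: "real set" and b :: real
  assumes R: "finite R" "\<forall>r\<in>R. 0 \<le> r"
  shows "finite {(\<Sum>e\<in>A. g e) | (A :: 'a set) g. finite A \<and> g ` A \<subseteq> R \<and> (\<Sum>e\<in>A. g e) \<le> b}"
proof -
  define total where "total m = (\<Sum>r\<in>R. real (m r) * r)" for m :: "real \<Rightarrow> nat"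
  have "finite (total ` (\<Pi>\<^sub>E r\<in>R. {..nat \<lceil>b / r\<rceil>}))"
    using R by (intro finite_imageI finite_PiE) auto
  moreover have "(\<Sum>e\<in>A. g e) \<in> total ` (\<Pi>\<^sub>E r\<in>R. {..nat \<lceil>b / r\<rceil>})"
    if A: "finite A" "g ` A \<subseteq> R" and le: "(\<Sum>e\<in>A. g e) \<le> b" for A :: "'a set" and g
  proof -
    define count where "count r = card {e\<in>A. g e = r}" for r
    have "(\<Sum>e\<in>A. g e) = (\<Sum>r\<in>R. \<Sum>e\<in>{e\<in>A. g e = r}. g e)"
      using A R by (intro sum.group[symmetric]) auto
    also have "\<dots> = total count"
      unfolding total_def count_def by (intro sum.cong) auto
    finally have sum_eq: "(\<Sum>e\<in>A. g e) = total count" .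
    \<comment> \<open>only the zero value can occur unboundedly often; its count does not matter\<close>
    define m where "m = (\<lambda>r\<in>R. if r = 0 then 0 else count r)"
    have "total m = total count"
      unfolding total_def m_def by (intro sum.cong) auto
    moreover have "m \<in> (\<Pi>\<^sub>E r\<in>R. {..nat \<lceil>b / r\<rceil>})"
    proof (rule PiE_I)
      fix r assume r: "r \<in> R"
      show "m r \<in> {..nat \<lceil>b / r\<rceil>}"
      proof (cases "r = 0")
        case False
        with r R have "r > 0" by force
        have "real (count r) * r \<le> total count"
          unfolding total_def using r R by (intro member_le_sum) auto
        with le sum_eq have "real (count r) * r \<le> b" by simp
        with \<open>r > 0\<close> have "real (count r) \<le> b / r" by (simp add: field_simps)
        then have "count r \<le> nat \<lceil>b / r\<rceil>" by linarith
        with r False show ?thesis by (simp add: m_def)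
      qed (use r in \<open>simp add: m_def\<close>)
    qed (simp add: m_def)
    ultimately show ?thesis unfolding sum_eq by (metis image_eqI)
  qed
  ultimately show ?thesis by (auto elim!: finite_subset[rotated])
qed

lemma ex_min_if_finite_sublevel:
  fixes c :: "'a \<Rightarrow> 'b::linorder"
  assumes "P x0" and fin: "finite {c x | x. P x \<and> c x \<le> c x0}"
  shows "\<exists>x. P x \<and> (\<forall>y. P y \<longrightarrow> c x \<le> c y)"
proof -
  let ?C = "{c x | x. P x \<and> c x \<le> c x0}"
  have "Min ?C \<in> ?C" using fin \<open>P x0\<close> by (intro Min_in) auto
  then obtain x where x: "P x" "c x = Min ?C" "c x \<le> c x0" by auto
  have "c x \<le> c y" if "P y" for y
  proof (cases "c y \<le> c x0")
    case True
    with fin \<open>P y\<close> show ?thesis unfolding x(2) by (intro Min_le) auto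
  qed (use x(3) in auto)
  with x(1) show ?thesis by blast
qed

lemma adj_rtrancl_from_isolated:
  assumes "\<forall>e\<in>E. fst e \<noteq> u \<and> snd e \<noteq> u" and "(u, w) \<in> (adj E)\<^sup>*"
  shows "w = u"
  using assms(2) by induction (use assms(1) in \<open>auto simp: adj_def\<close>)

lemma tree_n_star:
  assumes "n \<ge> 2"
  shows "tree_n n {..n} ((\<lambda>u. (u, n)) ` {..<n})"
proof -
  define E where "E = (\<lambda>u. (u, n)) ` {..<n}"
  have to_centre: "(u, n) \<in> (adj E)\<^sup>*" and from_centre: "(n, u) \<in> (adj E)\<^sup>*" if "u \<le> n" for u
    using that by (cases "u = n"; force simp: adj_def E_def)+
  have "connected_graph {..n} E"
    unfolding connected_graph_def using to_centre from_centre by (meson atMost_iff rtrancl_trans)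
  moreover have "\<not> connected_graph {..n} (E - {e})" if "e \<in> E" for e
  proof
    assume "connected_graph {..n} (E - {e})"
    moreover obtain u where u: "u < n" "e = (u, n)" using \<open>e \<in> E\<close> by (auto simp: E_def)
    ultimately have "(u, n) \<in> (adj (E - {e}))\<^sup>*" by (auto simp: connected_graph_def)
    moreover have "\<forall>e'\<in>E - {e}. fst e' \<noteq> u \<and> snd e' \<noteq> u" using u by (auto simp: E_def)
    ultimately show False using adj_rtrancl_from_isolated u by fastforce
  qed
  moreover have "degree E n = n"
  proof -
    have "{e \<in> E. fst e = n \<or> snd e = n} = E" by (auto simp: E_def)
    moreover have "card E = n" unfolding E_def by (subst card_image) (auto simp: inj_on_def)
    ultimately show ?thesis by (simp add: degree_def)
  qed
  moreover have "degree E u = 1" if "u < n" for u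
  proof -
    have "{e \<in> E. fst e = u \<or> snd e = u} = {(u, n)}" using that by (auto simp: E_def)
    then show ?thesis by (simp add: degree_def)
  qed
  ultimately show ?thesis
    using assms unfolding tree_n_def is_tree_def E_def[symmetric]
    by (auto simp: E_def le_less)
qed

lemma tree_n_exists:
  assumes "n \<ge> 1"
  shows "\<exists>V E. tree_n n V E"
proof (cases "n = 1")
  case True
  then have "tree_n n {0} {}"
    by (auto simp: tree_n_def is_tree_def connected_graph_def degree_def)
  then show ?thesis by blast
next
  case False
  with assms have "n \<ge> 2" by simp
  then show ?thesis using tree_n_star by blast
qed

lemma tree_n_finite_edges: "tree_n n V E \<Longrightarrow> finite E"
  unfolding tree_n_def is_tree_def by (auto intro: finite_subset[of _ "V \<times> V"])

lemma AML2_feasible_exists: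
  assumes "n \<ge> 1" and "\<forall>u<n. length (mu u) = k"
  shows "\<exists>V E lam. AML2_feasible n k mu V E lam"
proof -
  obtain V E where "tree_n n V E" using tree_n_exists assms(1) by blast
  then have "AML2_feasible n k mu V E (ext n k mu (\<lambda>_ _. False))"
    using ext_assignment_ok[OF assms(2)] by (simp add: AML2_feasible_def)
  then show ?thesis by blast
qed

lemma edge_dist_le: "edge_dist k lam e \<le> k"
  unfolding edge_dist_def hamming_def by (rule card_mono[of "{..<k}", simplified]) auto

lemma AML2_feasible_min_edge_cost:
  fixes h :: "nat \<Rightarrow> real"
  assumes "n \<ge> 1" and "\<forall>u<n. length (mu u) = k" and h: "\<forall>d\<le>k. 0 \<le> h d"
  shows "\<exists>V E lam. AML2_feasible n k mu V E lam \<and>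
    (\<forall>V' E' lam'. AML2_feasible n k mu V' E' lam' \<longrightarrow>
       (\<Sum>e\<in>E. h (edge_dist k lam e)) \<le> (\<Sum>e\<in>E'. h (edge_dist k lam' e)))"
proof -
  define P where "P = (\<lambda>(V, E, lam). AML2_feasible n k mu V E lam)"
  define c where "c = (\<lambda>(V :: nat set, E, lam). \<Sum>e\<in>E. h (edge_dist k lam e))"
  obtain V0 E0 lam0 where x0: "P (V0, E0, lam0)"
    using AML2_feasible_exists[OF assms(1,2)] by (auto simp: P_def)
  have "{c x | x. P x \<and> c x \<le> c (V0, E0, lam0)} \<subseteq>
      {(\<Sum>e\<in>E. g e) | (E :: (nat \<times> nat) set) g.
        finite E \<and> g ` E \<subseteq> h ` {..k} \<and> (\<Sum>e\<in>E. g e) \<le> c (V0, E0, lam0)}"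
  proof clarify
    fix V E lam assume "P (V, E, lam)" and le: "c (V, E, lam) \<le> c (V0, E0, lam0)"
    then have "finite E" by (auto simp: P_def AML2_feasible_def tree_n_finite_edges)
    moreover have "(\<lambda>e. h (edge_dist k lam e)) ` E \<subseteq> h ` {..k}" using edge_dist_le by auto
    ultimately show "\<exists>(E' :: (nat \<times> nat) set) g. c (V, E, lam) = (\<Sum>e\<in>E'. g e) \<and>
        finite E' \<and> g ` E' \<subseteq> h ` {..k} \<and> (\<Sum>e\<in>E'. g e) \<le> c (V0, E0, lam0)"
      using le unfolding c_def by auto
  qed
  moreover have "finite \<dots>" using h by (intro finite_bounded_sums) auto
  ultimately have "finite {c x | x. P x \<and> c x \<le> c (V0, E0, lam0)}" by (rule finite_subset)
  from ex_min_if_finite_sublevel[OF x0 this] obtain x where x: "P x" "\<forall>y. P y \<longrightarrow> c x \<le> c y"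
    by blast
  obtain V E lam where "x = (V, E, lam)" by (cases x)
  with x show ?thesis unfolding P_def c_def by fastforce
qed

definition edge_likelihood :: "nat \<Rightarrow> nat \<Rightarrow> real \<Rightarrow> real" where
  "edge_likelihood k d p = p ^ d * (1 - p) ^ (k - d)"

lemma likelihood_eq_prod_edge_likelihood:
  "likelihood k E p lam = (\<Prod>e\<in>E. edge_likelihood k (edge_dist k lam e) (p e))"
  unfolding likelihood_def edge_likelihood_def ..

lemma edge_likelihood_nonneg: "0 \<le> p \<Longrightarrow> p \<le> 1 \<Longrightarrow> 0 \<le> edge_likelihood k d p"
  unfolding edge_likelihood_def by simp

lemma edge_likelihood_le_one: "0 \<le> p \<Longrightarrow> p \<le> 1 \<Longrightarrow> edge_likelihood k d p \<le> 1"
  unfolding edge_likelihood_def by (intro mult_le_one power_le_one) auto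

definition tuned_likelihood ::
    "nat \<Rightarrow> (nat \<Rightarrow> real) \<Rightarrow> (nat \<times> nat) set \<Rightarrow> (nat \<Rightarrow> bool list) \<Rightarrow> real" where
  "tuned_likelihood k q E lam =
     (\<Prod>e\<in>E. edge_likelihood k (edge_dist k lam e) (q (edge_dist k lam e)))"

definition maximizes_edge_likelihood :: "nat \<Rightarrow> real set \<Rightarrow> (nat \<Rightarrow> real) \<Rightarrow> bool" where
  "maximizes_edge_likelihood k S q \<longleftrightarrow> S \<subseteq> {0..1} \<and>
     (\<forall>d\<le>k. q d \<in> S \<and> (\<forall>p\<in>S. edge_likelihood k d p \<le> edge_likelihood k d (q d)))"

lemma tuned_likelihood_le_ext:
  assumes q: "maximizes_edge_likelihood k S q" and leaves: "\<forall>v<n. lam v = mu v"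
  shows "\<exists>f. tuned_likelihood k q E lam \<le> tuned_likelihood k q E (ext n k mu f)"
proof -
  define p where "p e = q (edge_dist k lam e)" for e
  have p_in_S: "p e \<in> S" for e
    using q edge_dist_le by (simp add: p_def maximizes_edge_likelihood_def)
  have p_unit: "0 \<le> p e \<and> p e \<le> 1" for e
    using p_in_S[of e] q by (auto simp: maximizes_edge_likelihood_def)
  obtain f where f: "likelihood k E p lam \<le> likelihood k E p (ext n k mu f)"
    using likelihood_le_ext p_unit leaves by blast
  have "tuned_likelihood k q E lam = likelihood k E p lam"
    unfolding likelihood_eq_prod_edge_likelihood tuned_likelihood_def p_def ..
  also have "\<dots> \<le> likelihood k E p (ext n k mu f)" by (rule f)
  also have "\<dots> \<le> tuned_likelihood k q E (ext n k mu f)"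
    unfolding likelihood_eq_prod_edge_likelihood tuned_likelihood_def
    using p_in_S p_unit q edge_dist_le
    by (intro prod_mono) (auto simp: maximizes_edge_likelihood_def intro: edge_likelihood_nonneg)
  finally show ?thesis by blast
qed

lemma log_prod:
  fixes f :: "'a \<Rightarrow> real"
  shows "finite I \<Longrightarrow> (\<And>i. i \<in> I \<Longrightarrow> 0 < f i) \<Longrightarrow> log b (\<Prod>i\<in>I. f i) = (\<Sum>i\<in>I. log b (f i))"
proof (induction I rule: finite_induct)
  case (insert x F)
  moreover have "0 < prod f F" using insert.prems by (intro prod_pos) auto
  ultimately show ?case by (simp add: log_mult_pos)
qed simp

lemma tuned_likelihood_max_at_ext:
  assumes "n \<ge> 1" and len: "\<forall>u<n. length (mu u) = k"
    and q: "maximizes_edge_likelihood k S q" and pos: "\<forall>d\<le>k. 0 < edge_likelihood k d (q d)"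
  shows "\<exists>V E f. AML2_feasible n k mu V E (ext n k mu f) \<and>
    (\<forall>V' E' lam'. AML2_feasible n k mu V' E' lam' \<longrightarrow>
       tuned_likelihood k q E' lam' \<le> tuned_likelihood k q E (ext n k mu f))"
proof -
  define h where "h d = - log 2 (edge_likelihood k d (q d))" for d
  have tuned_pos: "0 < tuned_likelihood k q E lam" for E lam
    unfolding tuned_likelihood_def using pos edge_dist_le by (intro prod_pos) auto
  have log_tuned: "log 2 (tuned_likelihood k q E lam) = - (\<Sum>e\<in>E. h (edge_dist k lam e))"
    if "AML2_feasible n k mu V E lam" for V E lam
    using that pos edge_dist_le
    by (auto simp: tuned_likelihood_def h_def AML2_feasible_def sum_negf
        intro!: log_prod dest: tree_n_finite_edges)
  have "0 \<le> h d" if "d \<le> k" for d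
    using q pos that edge_likelihood_le_one[of "q d" k d]
    by (auto simp: h_def maximizes_edge_likelihood_def)
  then obtain V E lam where feas: "AML2_feasible n k mu V E lam"
    and min: "\<And>V' E' lam'. AML2_feasible n k mu V' E' lam' \<Longrightarrow>
      (\<Sum>e\<in>E. h (edge_dist k lam e)) \<le> (\<Sum>e\<in>E'. h (edge_dist k lam' e))"
    using AML2_feasible_min_edge_cost[OF assms(1) len] by blast
  have "\<forall>v<n. lam v = mu v" using feas by (simp add: AML2_feasible_def assignment_ok_def)
  then obtain f where f: "tuned_likelihood k q E lam \<le> tuned_likelihood k q E (ext n k mu f)"
    using tuned_likelihood_le_ext[OF q] by blast
  have "tuned_likelihood k q E' lam' \<le> tuned_likelihood k q E (ext n k mu f)"
    if feas': "AML2_feasible n k mu V' E' lam'" for V' E' lam'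
  proof -
    have "log 2 (tuned_likelihood k q E' lam') \<le> log 2 (tuned_likelihood k q E lam)"
      using log_tuned[OF feas] log_tuned[OF feas'] min[OF feas'] by simp
    with tuned_pos have "tuned_likelihood k q E' lam' \<le> tuned_likelihood k q E lam" by simp
    with f show ?thesis by simp
  qed
  moreover have "AML2_feasible n k mu V E (ext n k mu f)"
    using feas ext_assignment_ok[OF len] by (simp add: AML2_feasible_def)
  ultimately show ?thesis by blast
qed

lemma edge_likelihood_frequency_pos:
  assumes "d \<le> k"
  shows "0 < edge_likelihood k d (real d / real k)"
proof (cases "d = k")
  case False
  with assms have "real d / real k < 1" by simp
  then show ?thesis using assms by (cases "d = 0") (auto simp: edge_likelihood_def)
qed (auto simp: edge_likelihood_def)

lemma edge_likelihood_le_frequency: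
  assumes d: "d \<le> k" and p: "0 \<le> p" "p \<le> 1"
  shows "edge_likelihood k d p \<le> edge_likelihood k d (real d / real k)"
proof -
  consider "d = 0" | "d = k" | "0 < d" "d < k" "p = 0 \<or> p = 1" | "0 < d" "d < k" "0 < p" "p < 1"
    using d p by linarith
  then show ?thesis
  proof cases
    case 3
    then show ?thesis using less_imp_le[OF edge_likelihood_frequency_pos[OF d]]
      by (auto simp: edge_likelihood_def zero_power)
  next
    case 4
    define x where "x = real d / real k"
    have x: "0 < x" "x < 1" and kx: "real k * x = real d" "real (k - d) = real k * (1 - x)"
      using 4 by (auto simp: x_def of_nat_diff right_diff_distrib)
    have "real d * ln (p / x) \<le> real d * (p / x - 1)"
      using 4 x by (intro mult_left_mono ln_le_minus_one) auto
    moreover have "real (k - d) * ln ((1 - p) / (1 - x)) \<le> real (k - d) * ((1 - p) / (1 - x) - 1)"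
      using 4 x by (intro mult_left_mono ln_le_minus_one) auto
    moreover have "real d * (p / x - 1) + real (k - d) * ((1 - p) / (1 - x) - 1) = 0"
      using x kx by (simp add: field_simps)
    ultimately have
      "real d * ln p + real (k - d) * ln (1 - p) \<le> real d * ln x + real (k - d) * ln (1 - x)"
      using 4 x by (simp add: ln_div algebra_simps)
    then have "ln (edge_likelihood k d p) \<le> ln (edge_likelihood k d x)"
      using 4 x by (simp add: edge_likelihood_def ln_mult ln_realpow)
    then show ?thesis
      using 4 x unfolding x_def[symmetric] by (simp add: edge_likelihood_def)
  qed (use p edge_likelihood_le_one[of p k d] in \<open>auto simp: edge_likelihood_def\<close>)
qed

lemma H_frequency_eq_log_edge_likelihood:
  assumes "d \<le> k"
  shows "real k * H (real d / real k) = - log 2 (edge_likelihood k d (real d / real k))"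
proof -
  define x where "x = real d / real k"
  consider "d = 0" | "d = k" | "0 < d" "d < k" using assms by linarith
  then show ?thesis
  proof cases
    case 3
    then have x: "0 < x" "x < 1" and kx: "real k * x = real d" "real (k - d) = real k * (1 - x)"
      by (auto simp: x_def of_nat_diff right_diff_distrib)
    then have "log 2 (edge_likelihood k d x)
        = real k * x * log 2 x + real k * (1 - x) * log 2 (1 - x)"
      by (simp add: edge_likelihood_def log_mult_pos log_nat_power)
    then show ?thesis unfolding x_def[symmetric] H_def by (simp add: algebra_simps)
  qed (auto simp: H_def edge_likelihood_def)
qed

lemma cost2_eq_log_tuned_likelihood:
  assumes "finite E"
  shows "real k * cost2 k E lam = - log 2 (tuned_likelihood k (\<lambda>d. real d / real k) E lam)"
proof -
  have "real k * cost2 k E lam = (\<Sum>e\<in>E. real k * H (real (edge_dist k lam e) / real k))"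
    unfolding cost2_def by (simp add: sum_distrib_left)
  also have "\<dots> = - log 2 (tuned_likelihood k (\<lambda>d. real d / real k) E lam)"
    using assms edge_dist_le edge_likelihood_frequency_pos
    by (simp add: H_frequency_eq_log_edge_likelihood tuned_likelihood_def log_prod sum_negf)
  finally show ?thesis .
qed

lemma AML2_optimal_ext_exists:
  assumes "n \<ge> 1" and len: "\<forall>u<n. length (mu u) = k"
  shows "\<exists>V E lam f. AML2_optimal n k mu V E lam \<and> (\<forall>v\<in>V. lam v = ext n k mu f v)"
proof -
  have "maximizes_edge_likelihood k {0..1} (\<lambda>d. real d / real k)"
    by (auto simp: maximizes_edge_likelihood_def edge_likelihood_le_frequency divide_le_eq_1)
  from tuned_likelihood_max_at_ext[OF assms this] edge_likelihood_frequency_pos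
  obtain V E f where feas: "AML2_feasible n k mu V E (ext n k mu f)"
    and max: "\<And>V' E' lam'. AML2_feasible n k mu V' E' lam' \<Longrightarrow>
      tuned_likelihood k (\<lambda>d. real d / real k) E' lam'
      \<le> tuned_likelihood k (\<lambda>d. real d / real k) E (ext n k mu f)"
    by blast
  have "cost2 k E (ext n k mu f) \<le> cost2 k E' lam'" if feas': "AML2_feasible n k mu V' E' lam'"
    for V' E' lam'
  proof (cases "k = 0")
    case True
    \<comment> \<open>then every edge contributes H (d/0) = H 0 = 0\<close>
    then show ?thesis by (simp add: cost2_def H_def)
  next
    case False
    have "0 < tuned_likelihood k (\<lambda>d. real d / real k) E' lam'"
      unfolding tuned_likelihood_def using edge_likelihood_frequency_pos edge_dist_le
      by (intro prod_pos) auto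
    moreover have "finite E" "finite E'"
      using feas feas' by (auto simp: AML2_feasible_def tree_n_finite_edges)
    ultimately have "real k * cost2 k E (ext n k mu f) \<le> real k * cost2 k E' lam'"
      using max[OF feas'] by (simp add: cost2_eq_log_tuned_likelihood)
    with False show ?thesis by simp
  qed
  with feas show ?thesis by (auto simp: AML2_optimal_def)
qed

definition ml_rate :: "nat \<Rightarrow> nat \<Rightarrow> real" where
  "ml_rate k d = (SOME p. p \<in> {0..1/2} \<and>
     (\<forall>p'\<in>{0..1/2}. edge_likelihood k d p' \<le> edge_likelihood k d p))"

lemma maximizes_ml_rate: "maximizes_edge_likelihood k {0..1/2} (ml_rate k)"
proof -
  have "\<exists>p. p \<in> {0..1/2} \<and> (\<forall>p'\<in>{0..1/2}. edge_likelihood k d p' \<le> edge_likelihood k d p)" for d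
  proof -
    have "isCont (edge_likelihood k d) x" for x
      unfolding edge_likelihood_def[abs_def] by (intro continuous_intros)
    then obtain M where "\<forall>x. 0 \<le> x \<and> x \<le> 1/2 \<longrightarrow> edge_likelihood k d x \<le> M"
      "\<exists>x\<ge>0. x \<le> 1/2 \<and> edge_likelihood k d x = M"
      using isCont_eq_Ub[of 0 "1/2" "edge_likelihood k d"] by auto
    then show ?thesis by auto
  qed
  then show ?thesis
    unfolding maximizes_edge_likelihood_def ml_rate_def by (auto intro: someI2_ex)
qed

lemma edge_likelihood_ml_rate_pos:
  assumes "d \<le> k"
  shows "0 < edge_likelihood k d (ml_rate k d)"
proof -
  have "edge_likelihood k d (1/2) \<le> edge_likelihood k d (ml_rate k d)"
    using maximizes_ml_rate[of k] assms by (simp add: maximizes_edge_likelihood_def)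
  moreover have "0 < edge_likelihood k d (1/2)" by (simp add: edge_likelihood_def)
  ultimately show ?thesis by linarith
qed

lemma likelihood_le_tuned_ml_rate:
  assumes "\<forall>e\<in>E. 0 \<le> p e \<and> p e \<le> 1/2"
  shows "likelihood k E p lam \<le> tuned_likelihood k (ml_rate k) E lam"
  unfolding likelihood_eq_prod_edge_likelihood tuned_likelihood_def
proof (intro prod_mono conjI)
  fix e assume "e \<in> E"
  with assms have "p e \<in> {0..1/2}" by simp
  then show "0 \<le> edge_likelihood k (edge_dist k lam e) (p e)" by (simp add: edge_likelihood_nonneg)
  show "edge_likelihood k (edge_dist k lam e) (p e)
      \<le> edge_likelihood k (edge_dist k lam e) (ml_rate k (edge_dist k lam e))"
    using \<open>p e \<in> {0..1/2}\<close> maximizes_ml_rate[of k] edge_dist_le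
    by (simp add: maximizes_edge_likelihood_def)
qed

lemma cost1_le_if_likelihood_ge:
  assumes "0 < likelihood k E p lam" and "0 \<le> likelihood k E' p' lam'"
    and "likelihood k E' p' lam' \<le> likelihood k E p lam"
  shows "cost1 k E p lam \<le> cost1 k E' p' lam'"
  using assms by (cases "likelihood k E' p' lam' = 0") (auto simp: cost1_def)

lemma AML1_optimal_ext_exists:
  assumes "n \<ge> 1" and len: "\<forall>u<n. length (mu u) = k"
  shows "\<exists>V E p lam f. AML1_optimal n k mu V E p lam \<and> (\<forall>v\<in>V. lam v = ext n k mu f v)"
proof -
  obtain V E f where feas: "AML2_feasible n k mu V E (ext n k mu f)"
    and max: "\<And>V' E' lam'. AML2_feasible n k mu V' E' lam' \<Longrightarrow>
      tuned_likelihood k (ml_rate k) E' lam' \<le> tuned_likelihood k (ml_rate k) E (ext n k mu f)"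
    using tuned_likelihood_max_at_ext[OF assms maximizes_ml_rate] edge_likelihood_ml_rate_pos
    by blast
  define p where "p e = ml_rate k (edge_dist k (ext n k mu f) e)" for e
  have lik: "likelihood k E p (ext n k mu f) = tuned_likelihood k (ml_rate k) E (ext n k mu f)"
    unfolding likelihood_eq_prod_edge_likelihood tuned_likelihood_def p_def ..
  have pos: "0 < tuned_likelihood k (ml_rate k) E (ext n k mu f)"
    unfolding tuned_likelihood_def using edge_likelihood_ml_rate_pos edge_dist_le
    by (intro prod_pos) auto
  have p_range: "\<forall>e\<in>E. 0 \<le> p e \<and> p e \<le> 1/2"
    using maximizes_ml_rate[of k] edge_dist_le by (auto simp: p_def maximizes_edge_likelihood_def)
  have opt: "cost1 k E p (ext n k mu f) \<le> cost1 k E' p' lam'"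
    if "AML1_feasible n k mu V' E' p' lam'" for V' E' p' lam'
  proof (rule cost1_le_if_likelihood_ge)
    from that have feas': "AML2_feasible n k mu V' E' lam'" and p': "\<forall>e\<in>E'. 0 \<le> p' e \<and> p' e \<le> 1/2"
      by (auto simp: AML1_feasible_def AML2_feasible_def)
    show "0 \<le> likelihood k E' p' lam'"
      using p' unfolding likelihood_eq_prod_edge_likelihood
      by (auto intro!: prod_nonneg edge_likelihood_nonneg)
    show "likelihood k E' p' lam' \<le> likelihood k E p (ext n k mu f)"
      using likelihood_le_tuned_ml_rate[OF p', where k = k and lam = lam'] max[OF feas'] lik
      by linarith
  qed (use lik pos in simp)
  moreover have "AML1_feasible n k mu V E p (ext n k mu f)"
    using feas p_range by (simp add: AML1_feasible_def AML2_feasible_def)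
  ultimately have "AML1_optimal n k mu V E p (ext n k mu f)"
    unfolding AML1_optimal_def by blast
  then show ?thesis by blast
qed

theorem proposition1:
  fixes n k :: nat and mu :: "nat \<Rightarrow> bool list"
  assumes "n \<ge> 1"
    and "\<forall>u<n. length (mu u) = k"
  shows "(\<exists>V E p lam f. AML1_optimal n k mu V E p lam \<and> (\<forall>v\<in>V. lam v = ext n k mu f v))
       \<and> (\<exists>V E lam f. AML2_optimal n k mu V E lam \<and> (\<forall>v\<in>V. lam v = ext n k mu f v))"
  using AML1_optimal_ext_exists[OF assms] AML2_optimal_ext_exists[OF assms] by blast

end
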